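(* Let $s>0$, $Y>3s$, and for $\tau\geq0$ put $x_+(\tau)=\frac sYe^{s\tau}$, $\tau^*=\frac1s\ln\left(\frac Y{3s}\right)$, and consider the characteristic equation \[ \lambda^2+p(\tau)\lambda+(q\lambda+c(\tau))e^{-\lambda\tau}+\alpha(\tau)=0, \tag{C} \] with $p(\tau)=s\left(1+\frac{e^{s\tau}}{Y}\right)$, $q=-s$, $c(\tau)=s\left(1-\frac{2se^{s\tau}}{Y}\right)$, $\alpha(\tau)=\frac{s^2e^{s\tau}}{Y}$. Define for $\tau\in[0,\tau^*]$ \[ \omega_+(\tau)=\sqrt{\tfrac12\left(-x_+(\tau)^2+\sqrt{x_+(\tau)^4+s^2\left(12x_+(\tau)^2-16x_+(\tau)+4\right)}\right)}, \] \[ h_2(\omega,\tau)=\frac{\omega^2(1+s-x_+(\tau))-(1-2x_+(\tau))s\,x_+(\tau)}{s\left((1-2x_+(\tau))^2+\omega^2\right)}, \qquad \theta(\tau)=\arccos\big(h_2(\omega_+(\tau),\tau)\big)\in[0,\pi]. \] For each integer $n\geq0$, let $\tau_n^1<\tau_n^2<\dots<\tau_n^{j_n}$ denote the points $\tau\in(0,\tau^* )$ at which $\tau\omega_+(\tau)=\theta(\tau)+2n\pi$. Then (C) has a pair of purely imaginary roots if and only if $\tau=\tau_n^j\in(0,\tau^* )$ for some integer $n\geq0$ and some $j$. At every such $\tau_n^j$, the pair of purely imaginary roots $\pm i\omega_+(\tau_n^j)$ is simple and no other root of (C) is an integer multiple of $i\omega_+(\tau_n^j)$. If, in addition, $\frac{d}{d\tau}(\tau\omega_+(\tau))\big|_{\tau=\tau_n^j}\neq\frac{d}{d\tau}\theta(\tau)\big|_{\tau=\tau_n^j}$,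 then the transversality condition $\frac{d}{d\tau}\operatorname{Re}\lambda(\tau)\big|_{\tau=\tau_n^j}\neq0$ holds for the root branch $\lambda(\tau)$ with $\lambda(\tau_n^j)=i\omega_+(\tau_n^j)$.
   Context: (C) is the characteristic equation of the linearization of the delay system $\dot x=x(1-x)-yx$, $\dot y=-sy+Ye^{-s\tau}y(t-\tau)x(t-\tau)$ at its coexistence equilibrium $E_+=(x_+(\tau),1-x_+(\tau))$, which has positive components for $\tau\in[0,\tau^*]$ when $Y>3s$. The function $\theta$ is well defined and continuously differentiable on $[0,\tau^*]$. *)

theory Defs
  imports "HOL-Analysis.Analysis"
begin

definition xp :: "real \<Rightarrow> real \<Rightarrow> real \<Rightarrow> real" where
  "xp s Y t = s / Y * exp (s * t)"

definition taustar :: "real \<Rightarrow> real \<Rightarrow> real" where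
  "taustar s Y = ln (Y / (3 * s)) / s"

definition pc :: "real \<Rightarrow> real \<Rightarrow> real \<Rightarrow> real" where
  "pc s Y t = s * (1 + exp (s * t) / Y)"

definition qc :: "real \<Rightarrow> real" where
  "qc s = - s"

definition cc :: "real \<Rightarrow> real \<Rightarrow> real \<Rightarrow> real" where
  "cc s Y t = s * (1 - 2 * s * exp (s * t) / Y)"

definition alphac :: "real \<Rightarrow> real \<Rightarrow> real \<Rightarrow> real" where
  "alphac s Y t = s^2 * exp (s * t) / Y"

definition charD :: "real \<Rightarrow> real \<Rightarrow> complex \<Rightarrow> real \<Rightarrow> complex" where
  "charD s Y lam t = lam^2 + of_real (pc s Y t) * lam
     + (of_real (qc s) * lam + of_real (cc s Y t)) * exp (- lam * of_real t)
     + of_real (alphac s Y t)"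

definition omega_p :: "real \<Rightarrow> real \<Rightarrow> real \<Rightarrow> real" where
  "omega_p s Y t = (let x = xp s Y t in
     sqrt ((- (x^2) + sqrt (x^4 + s^2 * (12 * x^2 - 16 * x + 4))) / 2))"

definition h2 :: "real \<Rightarrow> real \<Rightarrow> real \<Rightarrow> real \<Rightarrow> real" where
  "h2 s Y w t = (let x = xp s Y t in
     (w^2 * (1 + s - x) - (1 - 2 * x) * s * x) / (s * ((1 - 2 * x)^2 + w^2)))"

definition theta :: "real \<Rightarrow> real \<Rightarrow> real \<Rightarrow> real" where
  "theta s Y t = arccos (h2 s Y (omega_p s Y t) t)"

definition crit_delays :: "real \<Rightarrow> real \<Rightarrow> real set" where
  "crit_delays s Y = {t \<in> {0<..<taustar s Y}.
     \<exists>n::nat. t * omega_p s Y t = theta s Y t + 2 * real n * pi}"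

end

theory Submission
  imports Defs
begin

(*
  On the imaginary axis, (C) at lambda = i w is the linear system
  [c, -b; b, c] (cos wt, sin wt) = (w^2 - s x, (s + x) w) with x = x_+(t), c = s (1 - 2x), b = s w.
  As (cos wt, sin wt) is a unit vector, w^2 must be the positive root of
  u^2 + x^2 u = s^2 (1 - 3x) (1 - x), i.e. w = omega_+, and then (cos wt, sin wt) = (cos theta, sin theta)
  with sin theta > 0; so imaginary roots occur exactly when t omega_+ = theta + 2 n pi.
  There Im (dC/dlambda) = 2 omega + s sin theta + t (s + x) omega > 0, so the root is simple, and a chord
  iteration (an implicit function theorem for families holomorphic in lambda) gives a differentiable
  root branch with lambda' = - C_t / C_lambda. Differentiating the identities that define omega_+ and
  theta yields Re lambda' = ((t omega_+)' - theta') omega (2 omega^2 + x^2) / |C_lambda|^2.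
*)

lemma field_differentiable_bound_affine:
  fixes f :: "'a::real_normed_field \<Rightarrow> 'a"
  assumes "convex S"
    and der: "\<And>z. z \<in> S \<Longrightarrow> (f has_field_derivative f' z) (at z)"
    and bound: "\<And>z. z \<in> S \<Longrightarrow> norm (f' z - d) \<le> B"
    and "x \<in> S" "y \<in> S"
  shows "norm (f x - f y - d * (x - y)) \<le> B * norm (x - y)"
proof -
  have "norm ((f x - d * x) - (f y - d * y)) \<le> B * norm (x - y)"
  proof (rule field_differentiable_bound[OF \<open>convex S\<close>])
    fix z assume "z \<in> S"
    have "((\<lambda>l. f l - d * l) has_field_derivative f' z - d) (at z)"
      using der[OF \<open>z \<in> S\<close>] by (auto intro!: derivative_eq_intros)
    then show "((\<lambda>l. f l - d * l) has_field_derivative f' z - d) (at z within S)"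
      by (rule has_field_derivative_at_within)
  qed (use bound assms in auto)
  then show ?thesis by (simp add: algebra_simps)
qed

lemma chord_iteration_root:
  fixes f :: "'a::{real_normed_field,banach} \<Rightarrow> 'a"
  assumes "d \<noteq> 0" "0 \<le> \<rho>"
    and affine: "\<And>x y. x \<in> cball a \<rho> \<Longrightarrow> y \<in> cball a \<rho> \<Longrightarrow>
        norm (f x - f y - d * (x - y)) \<le> norm d / 2 * norm (x - y)"
    and small: "norm (f a) \<le> norm d * \<rho> / 2"
  obtains z where "z \<in> cball a \<rho>" "f z = 0"
proof -
  define g where "g z = z - f z / d" for z
  have contr: "dist (g x) (g y) \<le> 1/2 * dist x y" if "x \<in> cball a \<rho>" "y \<in> cball a \<rho>" for x y
  proof -
    have "g x - g y = - (f x - f y - d * (x - y)) / d"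
      using \<open>d \<noteq> 0\<close> by (simp add: g_def field_simps)
    then have "dist (g x) (g y) = norm (f x - f y - d * (x - y)) / norm d"
      by (simp only: dist_norm norm_divide norm_minus_cancel)
    also have "\<dots> \<le> 1/2 * dist x y"
      using affine[OF that] \<open>d \<noteq> 0\<close> by (simp add: divide_le_eq dist_norm mult.commute)
    finally show ?thesis .
  qed
  have "g ` cball a \<rho> \<subseteq> cball a \<rho>"
  proof clarify
    fix z assume z: "z \<in> cball a \<rho>"
    have "dist a (g a) = norm (f a) / norm d" by (simp add: g_def dist_norm norm_divide)
    also have "\<dots> \<le> \<rho> / 2" using small \<open>d \<noteq> 0\<close> by (simp add: divide_le_eq mult.commute)
    finally have "dist a (g z) \<le> \<rho> / 2 + 1/2 * dist a z"
      using dist_triangle[of a "g z" "g a"] contr[of a z] z \<open>0 \<le> \<rho>\<close> by auto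
    then show "g z \<in> cball a \<rho>" using z by simp
  qed
  then obtain z where "z \<in> cball a \<rho>" "g z = z"
    using Banach_fix[of "cball a \<rho>" "1/2" g] contr \<open>0 \<le> \<rho>\<close>
    by (auto simp: complete_eq_closed)
  with \<open>d \<noteq> 0\<close> show thesis by (intro that) (auto simp: g_def)
qed

lemma affine_approx_root_unique:
  fixes f :: "'a::real_normed_field \<Rightarrow> 'a"
  assumes "d \<noteq> 0"
    and affine: "norm (f x - f y - d * (x - y)) \<le> norm d / 2 * norm (x - y)"
    and "f x = 0" "f y = 0"
  shows "x = y"
proof -
  have "norm d * norm (x - y) \<le> norm d / 2 * norm (x - y)"
    using affine \<open>f x = 0\<close> \<open>f y = 0\<close> by (simp add: norm_mult norm_minus_commute)
  then show ?thesis using \<open>d \<noteq> 0\<close> by (simp add: mult_le_cancel_right)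
qed

lemma has_vector_derivative_iff_quotient:
  fixes f :: "real \<Rightarrow> 'a::real_normed_vector"
  shows "(f has_vector_derivative D) (at x) \<longleftrightarrow> ((\<lambda>y. (f y - f x) /\<^sub>R (y - x)) \<longlongrightarrow> D) (at x)"
proof -
  have "norm (f y - f x - (y - x) *\<^sub>R D) / norm (y - x) = norm ((f y - f x) /\<^sub>R (y - x) - D)"
    if "y \<noteq> x" for y
  proof -
    have "(f y - f x) /\<^sub>R (y - x) - D = (f y - f x - (y - x) *\<^sub>R D) /\<^sub>R (y - x)"
      using that by (simp add: scaleR_diff_right)
    then show ?thesis by (simp add: divide_inverse_commute)
  qed
  then have "((\<lambda>y. norm (f y - f x - (y - x) *\<^sub>R D) / norm (y - x)) \<longlongrightarrow> 0) (at x) \<longleftrightarrow>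
      ((\<lambda>y. norm ((f y - f x) /\<^sub>R (y - x) - D)) \<longlongrightarrow> 0) (at x)"
    by (intro filterlim_cong refl) (auto simp: eventually_at_filter)
  then show ?thesis
    by (simp add: has_vector_derivative_def has_derivative_iff_norm bounded_linear_scaleR_left
        tendsto_norm_zero_iff LIM_zero_iff)
qed

lemma has_real_derivative_zero_on_open:
  fixes f :: "real \<Rightarrow> real"
  assumes "open S" "t \<in> S" "\<And>u. u \<in> S \<Longrightarrow> f u = 0" "(f has_real_derivative D) (at t)"
  shows "D = 0"
proof -
  have "((\<lambda>_. 0) has_real_derivative D) (at t)"
    by (rule has_field_derivative_transform_within_open[OF assms(4,1,2)]) (use assms(3) in simp)
  then show ?thesis using DERIV_const DERIV_unique by blast
qed

locale simple_root_family =
  fixes F F' :: "complex \<Rightarrow> real \<Rightarrow> complex" and a :: complex and t0 :: real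
  assumes has_deriv: "\<And>l t. ((\<lambda>l. F l t) has_field_derivative F' l t) (at l)"
    and isCont_deriv: "isCont (\<lambda>(l, t). F' l t) (a, t0)"
    and root: "F a t0 = 0"
    and simple: "F' a t0 \<noteq> 0"
begin

lemma deriv_near:
  assumes "B > 0"
  obtains r where "r > 0" "\<And>l t. l \<in> cball a r \<Longrightarrow> \<bar>t - t0\<bar> < r \<Longrightarrow> norm (F' l t - F' a t0) \<le> B"
proof -
  obtain \<delta> where "\<delta> > 0" and \<delta>: "\<And>z. dist z (a, t0) < \<delta> \<Longrightarrow> dist ((\<lambda>(l, t). F' l t) z) (F' a t0) < B"
    using isCont_deriv \<open>B > 0\<close> unfolding continuous_at_eps_delta by fastforce
  show thesis
  proof (rule that[of "\<delta> / 2"])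
    fix l t assume "l \<in> cball a (\<delta> / 2)" "\<bar>t - t0\<bar> < \<delta> / 2"
    have "dist (l, t) (a, t0) \<le> dist l a + dist t t0"
      using sqrt_sum_squares_le_sum_abs[of "dist l a" "dist t t0"] by (simp add: dist_Pair_Pair)
    also have "\<dots> < \<delta>"
      using \<open>l \<in> cball a (\<delta> / 2)\<close> \<open>\<bar>t - t0\<bar> < \<delta> / 2\<close> by (simp add: dist_commute dist_real_def abs_minus_commute)
    finally have "dist (l, t) (a, t0) < \<delta>" .
    then show "norm (F' l t - F' a t0) \<le> B" using \<delta> by (fastforce simp: dist_norm)
  qed (use \<open>\<delta> > 0\<close> in simp)
qed

lemma affine_near:
  assumes "B > 0"
  obtains r where "r > 0" "\<And>l1 l2 t. l1 \<in> cball a r \<Longrightarrow> l2 \<in> cball a r \<Longrightarrow> \<bar>t - t0\<bar> < r \<Longrightarrow>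
      norm (F l1 t - F l2 t - F' a t0 * (l1 - l2)) \<le> B * norm (l1 - l2)"
proof -
  obtain r where "r > 0" and r: "\<And>l t. l \<in> cball a r \<Longrightarrow> \<bar>t - t0\<bar> < r \<Longrightarrow> norm (F' l t - F' a t0) \<le> B"
    using deriv_near \<open>B > 0\<close> by blast
  show thesis
    by (rule that[OF \<open>r > 0\<close>], rule field_differentiable_bound_affine[of "cball a r"])
      (use has_deriv r in auto)
qed

lemma roots_near:
  obtains r where "r > 0"
    and "\<And>l1 l2 t. l1 \<in> cball a r \<Longrightarrow> l2 \<in> cball a r \<Longrightarrow> \<bar>t - t0\<bar> < r \<Longrightarrow>
      F l1 t = 0 \<Longrightarrow> F l2 t = 0 \<Longrightarrow> l1 = l2"
    and "\<And>\<rho> t. 0 \<le> \<rho> \<Longrightarrow> \<rho> \<le> r \<Longrightarrow> \<bar>t - t0\<bar> < r \<Longrightarrow> norm (F a t) \<le> norm (F' a t0) * \<rho> / 2 \<Longrightarrow>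
      \<exists>l \<in> cball a \<rho>. F l t = 0"
proof -
  define d where "d = F' a t0"
  have "d \<noteq> 0" using simple by (simp add: d_def)
  then obtain r where "r > 0" and affine: "\<And>l1 l2 t. l1 \<in> cball a r \<Longrightarrow> l2 \<in> cball a r \<Longrightarrow>
      \<bar>t - t0\<bar> < r \<Longrightarrow> norm (F l1 t - F l2 t - d * (l1 - l2)) \<le> norm d / 2 * norm (l1 - l2)"
    using affine_near[of "norm d / 2"] unfolding d_def by auto
  show thesis
  proof (rule that[OF \<open>r > 0\<close>])
    show "l1 = l2" if "l1 \<in> cball a r" "l2 \<in> cball a r" "\<bar>t - t0\<bar> < r" "F l1 t = 0" "F l2 t = 0"
      for l1 l2 t
      by (rule affine_approx_root_unique[OF \<open>d \<noteq> 0\<close> affine]) (use that in auto)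
    show "\<exists>l \<in> cball a \<rho>. F l t = 0"
      if "0 \<le> \<rho>" "\<rho> \<le> r" "\<bar>t - t0\<bar> < r" "norm (F a t) \<le> norm (F' a t0) * \<rho> / 2" for \<rho> t
      by (rule chord_iteration_root[where f="\<lambda>l. F l t", OF \<open>d \<noteq> 0\<close>])
        (use that affine in \<open>auto simp: d_def\<close>)
  qed
qed

lemma root_branch:
  assumes "isCont (F a) t0"
  obtains lam e where "e > 0" "lam t0 = a" "\<And>t. \<bar>t - t0\<bar> < e \<Longrightarrow> F (lam t) t = 0" "isCont lam t0"
proof -
  obtain r where "r > 0" and unique: "\<And>l1 l2 t. l1 \<in> cball a r \<Longrightarrow> l2 \<in> cball a r \<Longrightarrow>
      \<bar>t - t0\<bar> < r \<Longrightarrow> F l1 t = 0 \<Longrightarrow> F l2 t = 0 \<Longrightarrow> l1 = l2"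
    and exists: "\<And>\<rho> t. 0 \<le> \<rho> \<Longrightarrow> \<rho> \<le> r \<Longrightarrow> \<bar>t - t0\<bar> < r \<Longrightarrow>
      norm (F a t) \<le> norm (F' a t0) * \<rho> / 2 \<Longrightarrow> \<exists>l \<in> cball a \<rho>. F l t = 0"
    using roots_near by blast
  have small: "\<exists>\<eta>>0. \<forall>t. \<bar>t - t0\<bar> < \<eta> \<longrightarrow> norm (F a t) \<le> norm (F' a t0) * \<rho> / 2" if "\<rho> > 0" for \<rho>
  proof -
    have "norm (F' a t0) * \<rho> / 2 > 0" using that simple by simp
    then obtain \<eta> where "\<eta> > 0" "\<And>t. dist t t0 < \<eta> \<Longrightarrow> dist (F a t) (F a t0) < norm (F' a t0) * \<rho> / 2"
      using assms unfolding continuous_at_eps_delta by blast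
    then show ?thesis using root by (auto simp: dist_real_def intro!: exI[of _ \<eta>] less_imp_le)
  qed
  then obtain \<eta> where "\<eta> > 0" and \<eta>: "\<And>t. \<bar>t - t0\<bar> < \<eta> \<Longrightarrow> norm (F a t) \<le> norm (F' a t0) * r / 2"
    using \<open>r > 0\<close> by blast
  define e where "e = min r \<eta>"
  define lam where "lam t = (SOME l. l \<in> cball a r \<and> F l t = 0)" for t
  have lam: "lam t \<in> cball a r \<and> F (lam t) t = 0" if "\<bar>t - t0\<bar> < e" for t
    unfolding lam_def
    by (rule someI_ex) (use exists[of r t] \<eta> that \<open>r > 0\<close> in \<open>auto simp: e_def\<close>)
  have "e > 0" using \<open>r > 0\<close> \<open>\<eta> > 0\<close> by (simp add: e_def)
  have "lam t0 = a"
    using unique[of "lam t0" a t0] lam[of t0] \<open>e > 0\<close> \<open>r > 0\<close> root by auto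
  have close: "\<forall>\<^sub>F t in at t0. dist (lam t) a \<le> \<rho>" if "0 < \<rho>" "\<rho> \<le> r" for \<rho>
  proof -
    obtain \<eta>' where "\<eta>' > 0" and \<eta>': "\<And>t. \<bar>t - t0\<bar> < \<eta>' \<Longrightarrow> norm (F a t) \<le> norm (F' a t0) * \<rho> / 2"
      using small \<open>0 < \<rho>\<close> by blast
    have "dist (lam t) a \<le> \<rho>" if t: "\<bar>t - t0\<bar> < min \<eta>' e" for t
    proof -
      obtain l where "l \<in> cball a \<rho>" "F l t = 0"
        using exists[of \<rho> t] \<eta>'[of t] \<open>0 < \<rho>\<close> \<open>\<rho> \<le> r\<close> t by (auto simp: e_def)
      moreover have "l = lam t"
        using unique[of l "lam t" t] calculation lam[of t] \<open>\<rho> \<le> r\<close> t by (auto simp: e_def)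
      ultimately show ?thesis by (simp add: dist_commute)
    qed
    then show ?thesis
      using \<open>\<eta>' > 0\<close> \<open>e > 0\<close> by (auto simp: eventually_at dist_real_def intro!: exI[of _ "min \<eta>' e"])
  qed
  have "(lam \<longlongrightarrow> a) (at t0)"
  proof (rule tendstoI)
    fix \<epsilon> :: real assume "\<epsilon> > 0"
    with close[of "min (\<epsilon> / 2) r"] \<open>r > 0\<close> have "\<forall>\<^sub>F t in at t0. dist (lam t) a \<le> min (\<epsilon> / 2) r"
      by simp
    then show "\<forall>\<^sub>F t in at t0. dist (lam t) a < \<epsilon>"
      by eventually_elim (use \<open>\<epsilon> > 0\<close> in auto)
  qed
  then have "isCont lam t0" using \<open>lam t0 = a\<close> by (simp add: isCont_def)
  show thesis by (rule that[OF \<open>e > 0\<close> \<open>lam t0 = a\<close> _ \<open>isCont lam t0\<close>]) (use lam in blast)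
qed

definition secant :: "complex \<Rightarrow> real \<Rightarrow> complex" where
  "secant l t = (if l = a then F' a t else (F l t - F a t) / (l - a))"

lemma F_eq_secant: "F l t = F a t + secant l t * (l - a)"
  by (simp add: secant_def)

lemma secant_tendsto:
  assumes "isCont lam t0" "lam t0 = a"
  shows "((\<lambda>t. secant (lam t) t) \<longlongrightarrow> F' a t0) (at t0)"
proof (rule tendstoI)
  fix \<epsilon> :: real assume "\<epsilon> > 0"
  then obtain r where "r > 0"
    and r: "\<And>l t. l \<in> cball a r \<Longrightarrow> \<bar>t - t0\<bar> < r \<Longrightarrow> norm (F' l t - F' a t0) \<le> \<epsilon> / 2"
    using deriv_near[of "\<epsilon> / 2"] by auto
  have "\<forall>\<^sub>F t in at t0. dist (lam t) a < r"
    using assms \<open>r > 0\<close> by (metis isCont_def tendstoD)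
  moreover have "\<forall>\<^sub>F t in at t0. \<bar>t - t0\<bar> < r"
    using \<open>r > 0\<close> by (auto simp: eventually_at dist_real_def)
  ultimately show "\<forall>\<^sub>F t in at t0. dist (secant (lam t) t) (F' a t0) < \<epsilon>"
  proof eventually_elim
    case (elim t)
    then have "lam t \<in> cball a r" by (simp add: dist_commute)
    have "norm (secant (lam t) t - F' a t0) \<le> \<epsilon> / 2"
    proof (cases "lam t = a")
      case True
      then show ?thesis using r[of a t] \<open>r > 0\<close> elim(2) by (simp add: secant_def)
    next
      case False
      have "norm (F (lam t) t - F a t - F' a t0 * (lam t - a)) \<le> \<epsilon> / 2 * norm (lam t - a)"
        by (rule field_differentiable_bound_affine[of "cball a r"])
          (use has_deriv r elim(2) \<open>lam t \<in> cball a r\<close> \<open>r > 0\<close> in auto)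
      moreover have "secant (lam t) t - F' a t0 = (F (lam t) t - F a t - F' a t0 * (lam t - a)) / (lam t - a)"
        using False by (simp add: secant_def field_simps)
      ultimately show ?thesis using False by (simp add: norm_divide divide_le_eq)
    qed
    then show ?case using \<open>\<epsilon> > 0\<close> by (simp add: dist_norm)
  qed
qed

lemma root_branch_has_vector_derivative:
  assumes Ft: "(F a has_vector_derivative Ft) (at t0)"
    and "e > 0" "lam t0 = a" "\<And>t. \<bar>t - t0\<bar> < e \<Longrightarrow> F (lam t) t = 0" "isCont lam t0"
  shows "(lam has_vector_derivative - Ft / F' a t0) (at t0)"
proof -
  have slope: "((\<lambda>t. secant (lam t) t) \<longlongrightarrow> F' a t0) (at t0)"
    using secant_tendsto[OF assms(5,3)] .
  then have "\<forall>\<^sub>F t in at t0. secant (lam t) t \<noteq> 0"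
    using simple by (rule tendsto_imp_eventually_ne)
  moreover have "\<forall>\<^sub>F t in at t0. \<bar>t - t0\<bar> < e"
    using \<open>e > 0\<close> by (auto simp: eventually_at dist_real_def)
  ultimately have "\<forall>\<^sub>F t in at t0.
      - ((F a t - F a t0) /\<^sub>R (t - t0)) / secant (lam t) t = (lam t - lam t0) /\<^sub>R (t - t0)"
  proof eventually_elim
    case (elim t)
    have "F a t + secant (lam t) t * (lam t - a) = 0" using F_eq_secant assms(4) elim(2) by metis
    then have "lam t - a = - F a t / secant (lam t) t" using elim(1) by (simp add: field_simps)
    then show ?case using root \<open>lam t0 = a\<close> by (simp add: scaleR_conv_of_real)
  qed
  moreover have "((\<lambda>t. - ((F a t - F a t0) /\<^sub>R (t - t0)) / secant (lam t) t) \<longlongrightarrow> - Ft / F' a t0) (at t0)"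
    using Ft slope simple by (auto intro!: tendsto_intros simp: has_vector_derivative_iff_quotient)
  ultimately show ?thesis
    unfolding has_vector_derivative_iff_quotient by (blast intro: Lim_transform_eventually)
qed

end

lemma rotation_system_iff:
  fixes b c C S v1 v2 :: real
  assumes "c^2 + b^2 > 0"
  shows "(c * C - b * S = v1 \<and> b * C + c * S = v2) \<longleftrightarrow>
    (C = (c * v1 + b * v2) / (c^2 + b^2) \<and> S = (c * v2 - b * v1) / (c^2 + b^2))"
proof -
  define n where "n = c^2 + b^2"
  have "n \<noteq> 0" using assms(1) unfolding n_def by (rule less_imp_neq[symmetric])
  have "(C = (c * v1 + b * v2) / n \<and> S = (c * v2 - b * v1) / n) \<longleftrightarrow>
      (n * C = c * v1 + b * v2 \<and> n * S = c * v2 - b * v1)"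
    using \<open>n \<noteq> 0\<close> by (auto simp: field_simps)
  also have "\<dots> \<longleftrightarrow> (c * C - b * S = v1 \<and> b * C + c * S = v2)"
  proof
    assume *: "n * C = c * v1 + b * v2 \<and> n * S = c * v2 - b * v1"
    have "n * (c * C - b * S) = c * (n * C) - b * (n * S)" by (simp add: algebra_simps)
    also have "\<dots> = n * v1" unfolding *[THEN conjunct1] *[THEN conjunct2]
      by (simp add: n_def algebra_simps power2_eq_square)
    finally have "n * (c * C - b * S) = n * v1" .
    have "n * (b * C + c * S) = b * (n * C) + c * (n * S)" by (simp add: algebra_simps)
    also have "\<dots> = n * v2" unfolding *[THEN conjunct1] *[THEN conjunct2]
      by (simp add: n_def algebra_simps power2_eq_square)
    finally have "n * (b * C + c * S) = n * v2" .
    with \<open>n * (c * C - b * S) = n * v1\<close> show "c * C - b * S = v1 \<and> b * C + c * S = v2"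
      using \<open>n \<noteq> 0\<close> by simp
  next
    assume *: "c * C - b * S = v1 \<and> b * C + c * S = v2"
    have "n * C = c * (c * C - b * S) + b * (b * C + c * S)"
      "n * S = c * (b * C + c * S) - b * (c * C - b * S)"
      by (simp_all add: n_def algebra_simps power2_eq_square)
    then show "n * C = c * v1 + b * v2 \<and> n * S = c * v2 - b * v1"
      by (simp only: *[THEN conjunct1] *[THEN conjunct2])
  qed
  finally show ?thesis by (simp add: n_def)
qed

lemma rotation_system_unit:
  fixes b c v1 v2 :: real
  assumes "c^2 + b^2 > 0" "v1^2 + v2^2 = c^2 + b^2"
  shows "((c * v1 + b * v2) / (c^2 + b^2))^2 + ((c * v2 - b * v1) / (c^2 + b^2))^2 = 1"
proof -
  define n where "n = c^2 + b^2"
  have "n \<noteq> 0" using assms(1) unfolding n_def by (rule less_imp_neq[symmetric])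
  have "((c * v1 + b * v2) / n)^2 + ((c * v2 - b * v1) / n)^2
      = ((c * v1 + b * v2)^2 + (c * v2 - b * v1)^2) / n^2"
    by (simp only: power_divide add_divide_distrib[symmetric])
  also have "(c * v1 + b * v2)^2 + (c * v2 - b * v1)^2 = n * (v1^2 + v2^2)"
    by (simp add: n_def algebra_simps power2_eq_square)
  finally show ?thesis using assms(2) \<open>n \<noteq> 0\<close> by (simp add: n_def power2_eq_square)
qed

lemma coeffs_xp:
  "pc s Y t = s + xp s Y t" "cc s Y t = s * (1 - 2 * xp s Y t)"
  "alphac s Y t = s * xp s Y t" "qc s = - s"
  by (simp_all add: pc_def cc_def alphac_def qc_def xp_def algebra_simps power2_eq_square)

lemma xp_bounds:
  assumes "s > 0" "Y > 3 * s" "t \<in> {0<..<taustar s Y}"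
  shows "0 < xp s Y t" "xp s Y t < 1/3"
proof -
  have "Y > 0" using assms by simp
  then show "0 < xp s Y t" using \<open>s > 0\<close> by (simp add: xp_def)
  have "s * t < ln (Y / (3 * s))" using assms by (simp add: taustar_def field_simps)
  then have "exp (s * t) < Y / (3 * s)" using \<open>s > 0\<close> \<open>Y > 0\<close>
    by (metis divide_pos_pos exp_less_cancel_iff exp_ln mult_pos_pos zero_less_numeral)
  then show "xp s Y t < 1/3" using \<open>s > 0\<close> \<open>Y > 0\<close> by (simp add: xp_def field_simps)
qed

lemma xp_has_real_derivative: "(xp s Y has_real_derivative s * xp s Y t) (at t)"
proof -
  have "((\<lambda>t. k * exp (s * t)) has_real_derivative s * (k * exp (s * t))) (at t)" for k
    by (auto intro!: derivative_eq_intros)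
  from this[of "s / Y"] show ?thesis unfolding xp_def[abs_def] .
qed

lemma exp_minus_imag_mult:
  "exp (- (\<i> * complex_of_real w) * complex_of_real t) = Complex (cos (w * t)) (- sin (w * t))"
proof -
  have "exp (- (\<i> * complex_of_real w) * complex_of_real t) = cis (- (w * t))"
    by (simp add: cis_conv_exp mult.assoc)
  then show ?thesis by (simp add: complex_eq_iff)
qed

lemma charD_cnj: "charD s Y (cnj l) t = cnj (charD s Y l t)"
  by (simp add: charD_def exp_cnj)

lemma charD_imag_axis:
  fixes s Y t w :: real
  defines "x \<equiv> xp s Y t"
  shows "charD s Y (\<i> * complex_of_real w) t =
    Complex (- (w^2) + s * x + s * (1 - 2 * x) * cos (w * t) - s * w * sin (w * t))
            ((s + x) * w - s * w * cos (w * t) - s * (1 - 2 * x) * sin (w * t))"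
  unfolding charD_def exp_minus_imag_mult x_def coeffs_xp
  by (simp add: complex_eq_iff power2_eq_square algebra_simps)

lemma charD_imag_root_iff:
  fixes s Y t w :: real
  defines "x \<equiv> xp s Y t"
  shows "charD s Y (\<i> * complex_of_real w) t = 0 \<longleftrightarrow>
    (s * (1 - 2 * x) * cos (w * t) - s * w * sin (w * t) = w^2 - s * x \<and>
     s * w * cos (w * t) + s * (1 - 2 * x) * sin (w * t) = (s + x) * w)"
  unfolding charD_imag_axis x_def complex_eq_iff by (auto simp: algebra_simps)

lemma crossing_modulus_iff:
  fixes s x w :: real
  shows "(w^2 - s * x)^2 + ((s + x) * w)^2 = (s * (1 - 2 * x))^2 + (s * w)^2 \<longleftrightarrow>
    (w^2)^2 + x^2 * w^2 = s^2 * (1 - 3 * x) * (1 - x)"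
  by (auto simp: algebra_simps power2_eq_square)

lemma quadratic_positive_root:
  fixes s x :: real
  assumes "s > 0" "0 < x" "x < 1/3"
  defines "W \<equiv> (- (x^2) + sqrt (x^4 + s^2 * (12 * x^2 - 16 * x + 4))) / 2"
  shows "W > 0" and "W^2 + x^2 * W = s^2 * (1 - 3 * x) * (1 - x)"
    and "W < s * (1 - x) + x * (1 - 2 * x)"
    and "\<And>u. u \<ge> 0 \<Longrightarrow> u^2 + x^2 * u = s^2 * (1 - 3 * x) * (1 - x) \<Longrightarrow> u = W"
proof -
  define k where "k = s^2 * (1 - 3 * x) * (1 - x)"
  have "k > 0" using assms by (simp add: k_def)
  define r where "r = sqrt ((x^2)^2 + 4 * k)"
  have "x^4 + s^2 * (12 * x^2 - 16 * x + 4) = (x^2)^2 + 4 * k"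
    by (simp add: k_def algebra_simps power2_eq_square power4_eq_xxxx)
  then have W: "W = (r - x^2) / 2" by (simp add: W_def r_def)
  have r2: "r^2 = (x^2)^2 + 4 * k" using \<open>k > 0\<close> by (simp add: r_def)
  have "x^2 < r" unfolding r_def using \<open>k > 0\<close> by (intro real_less_rsqrt) simp
  then show "W > 0" by (simp add: W)
  have quad: "W^2 + x^2 * W = k"
    using r2 by (simp add: W field_simps power2_eq_square)
  then show "W^2 + x^2 * W = s^2 * (1 - 3 * x) * (1 - x)" by (simp add: k_def)
  show "u = W" if "u \<ge> 0" "u^2 + x^2 * u = s^2 * (1 - 3 * x) * (1 - x)" for u
  proof -
    have "(u - W) * (u + W + x^2) = 0"
      using that(2) quad by (simp add: k_def algebra_simps power2_eq_square)
    moreover have "u + W + x^2 > 0" using that(1) \<open>W > 0\<close> by (simp add: add_nonneg_pos add_pos_nonneg)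
    ultimately show ?thesis by simp
  qed
  show "W < s * (1 - x) + x * (1 - 2 * x)"
  proof (rule ccontr)
    assume "\<not> ?thesis"
    moreover have "0 < x * (1 - 2 * x)" using assms by simp
    ultimately have "s * (1 - x) \<le> W" by linarith
    then have "(s * (1 - x))^2 \<le> W^2" using assms by (intro power_mono) auto
    moreover have "(s * (1 - x))^2 - k = 2 * x * (s^2 * (1 - x))"
      by (simp add: k_def algebra_simps power2_eq_square)
    moreover have "0 < 2 * x * (s^2 * (1 - x))" using assms by simp
    moreover have "0 \<le> x^2 * W" using \<open>W > 0\<close> by simp
    ultimately show False using quad by linarith
  qed
qed

lemma omega_p_sq_positive_root:
  assumes "s > 0" "Y > 3 * s" "t \<in> {0<..<taustar s Y}"
  defines "x \<equiv> xp s Y t" and "\<omega> \<equiv> omega_p s Y t"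
  shows "\<omega> > 0" and "(\<omega>^2)^2 + x^2 * \<omega>^2 = s^2 * (1 - 3 * x) * (1 - x)"
    and "\<omega>^2 < s * (1 - x) + x * (1 - 2 * x)"
    and "\<And>u. u \<ge> 0 \<Longrightarrow> u^2 + x^2 * u = s^2 * (1 - 3 * x) * (1 - x) \<Longrightarrow> u = \<omega>^2"
proof -
  have x: "0 < x" "x < 1/3" using xp_bounds[OF assms(1-3)] by (auto simp: x_def)
  note W = quadratic_positive_root[OF \<open>s > 0\<close> x]
  have \<omega>: "\<omega> = sqrt ((- (x^2) + sqrt (x^4 + s^2 * (12 * x^2 - 16 * x + 4))) / 2)"
    by (simp add: \<omega>_def omega_p_def x_def Let_def)
  show "\<omega> > 0" using W(1) \<omega> by simp
  show "(\<omega>^2)^2 + x^2 * \<omega>^2 = s^2 * (1 - 3 * x) * (1 - x)" "\<omega>^2 < s * (1 - x) + x * (1 - 2 * x)"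
    "\<And>u. u \<ge> 0 \<Longrightarrow> u^2 + x^2 * u = s^2 * (1 - 3 * x) * (1 - x) \<Longrightarrow> u = \<omega>^2"
    using W \<omega> by simp_all
qed

lemma theta_crossing:
  assumes "s > 0" "Y > 3 * s" "t \<in> {0<..<taustar s Y}"
  defines "x \<equiv> xp s Y t" and "\<omega> \<equiv> omega_p s Y t" and "\<theta> \<equiv> theta s Y t"
  shows "s * (1 - 2 * x) * cos \<theta> - s * \<omega> * sin \<theta> = \<omega>^2 - s * x \<and>
      s * \<omega> * cos \<theta> + s * (1 - 2 * x) * sin \<theta> = (s + x) * \<omega>"
    and "sin \<theta> > 0" and "- 1 < h2 s Y \<omega> t" and "h2 s Y \<omega> t < 1"
proof -
  have x: "0 < x" "x < 1/3" using xp_bounds[OF assms(1-3)] by (auto simp: x_def)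
  note \<omega> = omega_p_sq_positive_root[OF assms(1-3), folded x_def \<omega>_def]
  define c b v1 v2 where "c = s * (1 - 2 * x)" and "b = s * \<omega>"
    and "v1 = \<omega>^2 - s * x" and "v2 = (s + x) * \<omega>"
  define C S where "C = (c * v1 + b * v2) / (c^2 + b^2)" and "S = (c * v2 - b * v1) / (c^2 + b^2)"
  \<comment> \<open>h2 is the cosine component of the solution of the rotation system at \<open>\<lambda> = i\<omega>\<close>.\<close>
  have n: "c^2 + b^2 > 0" using \<open>s > 0\<close> x by (simp add: c_def add_pos_nonneg)
  have "h2 s Y \<omega> t = C"
  proof -
    have "c * v1 + b * v2 = s * (\<omega>^2 * (1 + s - x) - (1 - 2 * x) * s * x)"
      "c^2 + b^2 = s * (s * ((1 - 2 * x)^2 + \<omega>^2))"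
      by (simp_all add: c_def b_def v1_def v2_def algebra_simps power2_eq_square)
    then show ?thesis using \<open>s > 0\<close> by (simp add: h2_def C_def x_def Let_def)
  qed
  have "C^2 + S^2 = 1"
    unfolding C_def S_def using n \<omega>(2) crossing_modulus_iff[of \<omega> s x]
    by (intro rotation_system_unit) (simp_all add: c_def b_def v1_def v2_def)
  moreover have "S > 0"
  proof -
    have "c * v2 - b * v1 = s * \<omega> * (s * (1 - x) + x * (1 - 2 * x) - \<omega>^2)"
      by (simp add: c_def b_def v1_def v2_def algebra_simps power2_eq_square)
    then show ?thesis using \<omega>(1,3) \<open>s > 0\<close> n by (simp add: S_def)
  qed
  ultimately have "C^2 < 1" by (smt (verit) zero_less_power)
  then have C: "- 1 < C" "C < 1" by (auto simp: abs_square_less_1 abs_less_iff)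
  then show "- 1 < h2 s Y \<omega> t" "h2 s Y \<omega> t < 1" using \<open>h2 s Y \<omega> t = C\<close> by simp_all
  have \<theta>: "\<theta> = arccos C" using \<open>h2 s Y \<omega> t = C\<close> by (simp add: \<theta>_def theta_def \<omega>_def)
  have "cos \<theta> = C" using C by (simp add: \<theta>)
  moreover have "sin \<theta> = S"
    using C \<open>C^2 + S^2 = 1\<close> \<open>S > 0\<close> by (simp add: \<theta> sin_arccos real_sqrt_unique)
  ultimately show "sin \<theta> > 0" using \<open>S > 0\<close> by simp
  show "s * (1 - 2 * x) * cos \<theta> - s * \<omega> * sin \<theta> = \<omega>^2 - s * x \<and>
      s * \<omega> * cos \<theta> + s * (1 - 2 * x) * sin \<theta> = (s + x) * \<omega>"
    using rotation_system_iff[OF n, of "cos \<theta>" "sin \<theta>" v1 v2] \<open>cos \<theta> = C\<close> \<open>sin \<theta> = S\<close>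
    by (simp add: C_def S_def c_def b_def v1_def v2_def)
qed

lemma imaginary_root_freq:
  assumes "s > 0" "Y > 3 * s" "t \<in> {0<..<taustar s Y}"
    and root: "charD s Y (\<i> * complex_of_real w) t = 0"
  shows "w^2 = (omega_p s Y t)^2"
    and "w > 0 \<Longrightarrow> w = omega_p s Y t \<and> cos (w * t) = cos (theta s Y t) \<and> sin (w * t) = sin (theta s Y t)"
proof -
  define x where "x = xp s Y t"
  have x: "0 < x" "x < 1/3" using xp_bounds[OF assms(1-3)] by (auto simp: x_def)
  note \<omega> = omega_p_sq_positive_root[OF assms(1-3), folded x_def]
  have sys: "s * (1 - 2 * x) * cos (w * t) - s * w * sin (w * t) = w^2 - s * x \<and>
      s * w * cos (w * t) + s * (1 - 2 * x) * sin (w * t) = (s + x) * w"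
    using root by (simp add: charD_imag_root_iff x_def)
  have n: "(s * (1 - 2 * x))^2 + (s * w)^2 > 0" using \<open>s > 0\<close> x by (simp add: add_pos_nonneg)
  have "(w^2 - s * x)^2 + ((s + x) * w)^2 = (s * (1 - 2 * x) * cos (w * t) - s * w * sin (w * t))^2
      + (s * w * cos (w * t) + s * (1 - 2 * x) * sin (w * t))^2"
    using sys by simp
  also have "\<dots> = ((s * (1 - 2 * x))^2 + (s * w)^2) * ((cos (w * t))^2 + (sin (w * t))^2)"
    by algebra
  finally have "(w^2 - s * x)^2 + ((s + x) * w)^2 = (s * (1 - 2 * x))^2 + (s * w)^2" by simp
  then show w2: "w^2 = (omega_p s Y t)^2"
    using \<omega>(4)[of "w^2"] by (simp add: crossing_modulus_iff)
  assume "w > 0"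
  then have "w = omega_p s Y t" using w2 \<omega>(1) by (simp add: power2_eq_iff_nonneg)
  moreover have "s * (1 - 2 * x) * cos (theta s Y t) - s * w * sin (theta s Y t) = w^2 - s * x \<and>
      s * w * cos (theta s Y t) + s * (1 - 2 * x) * sin (theta s Y t) = (s + x) * w"
    using theta_crossing(1)[OF assms(1-3)] \<open>w = omega_p s Y t\<close> by (simp add: x_def)
  ultimately show "w = omega_p s Y t \<and> cos (w * t) = cos (theta s Y t) \<and> sin (w * t) = sin (theta s Y t)"
    using sys rotation_system_iff[OF n] by metis
qed

lemma charD_conj_imag: "charD s Y (- \<i> * complex_of_real w) t = cnj (charD s Y (\<i> * complex_of_real w) t)"
  using charD_cnj[of s Y "\<i> * complex_of_real w" t] by simp

lemma crit_delay_cos_sin: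
  assumes "t \<in> crit_delays s Y"
  shows "cos (omega_p s Y t * t) = cos (theta s Y t)" "sin (omega_p s Y t * t) = sin (theta s Y t)"
proof -
  obtain n :: nat where "t * omega_p s Y t = theta s Y t + 2 * real n * pi"
    using assms by (auto simp: crit_delays_def)
  then have "omega_p s Y t * t = theta s Y t + 2 * pi * real_of_int (int n)"
    by (simp add: algebra_simps)
  then show "cos (omega_p s Y t * t) = cos (theta s Y t)" "sin (omega_p s Y t * t) = sin (theta s Y t)"
    using sin_cos_eq_iff by blast+
qed

lemma crit_delay_imaginary_roots:
  assumes "s > 0" "Y > 3 * s" "t \<in> crit_delays s Y"
  shows "charD s Y (\<i> * complex_of_real (omega_p s Y t)) t = 0"
    and "charD s Y (- \<i> * complex_of_real (omega_p s Y t)) t = 0"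
proof -
  have "t \<in> {0<..<taustar s Y}" using assms(3) by (simp add: crit_delays_def)
  then show root: "charD s Y (\<i> * complex_of_real (omega_p s Y t)) t = 0"
    using theta_crossing(1)[OF assms(1,2)] crit_delay_cos_sin[OF assms(3)]
    by (simp add: charD_imag_root_iff)
  then show "charD s Y (- \<i> * complex_of_real (omega_p s Y t)) t = 0"
    unfolding charD_conj_imag by simp
qed

lemma imaginary_root_iff_crit_delay:
  assumes "s > 0" "Y > 3 * s" "t \<in> {0<..<taustar s Y}"
  shows "(\<exists>w::real. w > 0 \<and> charD s Y (\<i> * of_real w) t = 0 \<and> charD s Y (- \<i> * of_real w) t = 0)
    \<longleftrightarrow> t \<in> crit_delays s Y"
proof
  assume "t \<in> crit_delays s Y"
  then show "\<exists>w::real. w > 0 \<and> charD s Y (\<i> * of_real w) t = 0 \<and> charD s Y (- \<i> * of_real w) t = 0"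
    using crit_delay_imaginary_roots[OF assms(1,2)] omega_p_sq_positive_root(1)[OF assms] by blast
next
  assume "\<exists>w::real. w > 0 \<and> charD s Y (\<i> * of_real w) t = 0 \<and> charD s Y (- \<i> * of_real w) t = 0"
  then obtain w where "w > 0" "charD s Y (\<i> * of_real w) t = 0" by blast
  then have w: "w = omega_p s Y t" "sin (w * t) = sin (theta s Y t) \<and> cos (w * t) = cos (theta s Y t)"
    using imaginary_root_freq(2)[OF assms] by auto
  then obtain n :: int where n: "w * t = theta s Y t + 2 * pi * n"
    using sin_cos_eq_iff by blast
  have "theta s Y t \<le> pi"
    unfolding theta_def using theta_crossing(3,4)[OF assms] by (intro arccos_ubound) auto
  moreover have "w * t > 0" using \<open>w > 0\<close> assms(3) by simp
  ultimately have "pi * (2 * n + 1) > 0" using n by (simp add: algebra_simps)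
  then have "n \<ge> 0" by (simp add: zero_less_mult_iff)
  then have "t * omega_p s Y t = theta s Y t + 2 * real (nat n) * pi"
    using n w(1) by (simp add: algebra_simps)
  then show "t \<in> crit_delays s Y" using assms(3) by (auto simp: crit_delays_def)
qed

definition charD_dlam :: "real \<Rightarrow> real \<Rightarrow> complex \<Rightarrow> real \<Rightarrow> complex" where
  "charD_dlam s Y l t = 2 * l + of_real (pc s Y t) + of_real (qc s) * exp (- l * of_real t)
     - of_real t * (of_real (qc s) * l + of_real (cc s Y t)) * exp (- l * of_real t)"

\<comment> \<open>The coefficients come from \<open>xp' = s * xp\<close>.\<close>
definition charD_dt :: "real \<Rightarrow> real \<Rightarrow> complex \<Rightarrow> real \<Rightarrow> complex" where
  "charD_dt s Y l t = of_real (s * xp s Y t) * l + of_real (- 2 * s^2 * xp s Y t) * exp (- l * of_real t)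
     - l * (of_real (qc s) * l + of_real (cc s Y t)) * exp (- l * of_real t) + of_real (s^2 * xp s Y t)"

lemma charD_has_field_derivative:
  "((\<lambda>l. charD s Y l t) has_field_derivative charD_dlam s Y l t) (at l)"
  unfolding charD_def charD_dlam_def
  by (auto intro!: derivative_eq_intros simp: algebra_simps power2_eq_square)

lemma isCont_charD_dlam: "isCont (\<lambda>(l, t). charD_dlam s Y l t) z"
  unfolding charD_dlam_def coeffs_xp xp_def case_prod_unfold by (intro continuous_intros)

lemma charD_has_vector_derivative:
  "((\<lambda>t. charD s Y l t) has_vector_derivative charD_dt s Y l t) (at t)"
proof -
  define G where "G z = l^2 + (of_real s + of_real (s / Y) * exp (of_real s * z)) * l
     + (of_real (- s) * l + of_real s * (1 - 2 * (of_real (s / Y) * exp (of_real s * z)))) * exp (- l * z)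
     + of_real s * (of_real (s / Y) * exp (of_real s * z))" for z :: complex
  have "(\<lambda>t. charD s Y l t) = (\<lambda>t. G (of_real t))"
    by (simp add: fun_eq_iff G_def charD_def coeffs_xp xp_def of_real_exp)
  moreover have "(G has_field_derivative charD_dt s Y l t) (at (of_real t))"
    unfolding G_def charD_dt_def coeffs_xp xp_def
    by (rule derivative_eq_intros refl)+ (simp add: exp_of_real[symmetric] algebra_simps power2_eq_square)
  ultimately show ?thesis by (simp add: has_vector_derivative_real_field)
qed

lemma charD_dlam_cnj: "charD_dlam s Y (cnj l) t = cnj (charD_dlam s Y l t)"
  by (simp add: charD_dlam_def exp_cnj)

lemma charD_dlam_imag_axis:
  fixes s Y t w :: real
  defines "x \<equiv> xp s Y t"
  shows "charD_dlam s Y (\<i> * complex_of_real w) t =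
    Complex (s + x - s * cos (w * t) - t * (s * (1 - 2 * x) * cos (w * t) - s * w * sin (w * t)))
            (2 * w + s * sin (w * t) + t * (s * (1 - 2 * x) * sin (w * t) + s * w * cos (w * t)))"
  unfolding charD_dlam_def exp_minus_imag_mult x_def coeffs_xp
  by (simp add: complex_eq_iff algebra_simps)

lemma crit_delay_simple_roots:
  assumes "s > 0" "Y > 3 * s" "t \<in> crit_delays s Y"
  shows "charD_dlam s Y (\<i> * complex_of_real (omega_p s Y t)) t \<noteq> 0"
    and "charD_dlam s Y (- \<i> * complex_of_real (omega_p s Y t)) t \<noteq> 0"
proof -
  have t: "t \<in> {0<..<taustar s Y}" using assms(3) by (simp add: crit_delays_def)
  define x \<omega> where "x = xp s Y t" and "\<omega> = omega_p s Y t"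
  have "0 < x" using xp_bounds[OF assms(1,2) t] by (simp add: x_def)
  have "\<omega> > 0" using omega_p_sq_positive_root(1)[OF assms(1,2) t] by (simp add: \<omega>_def)
  have "sin (\<omega> * t) > 0" and "s * \<omega> * cos (\<omega> * t) + s * (1 - 2 * x) * sin (\<omega> * t) = (s + x) * \<omega>"
    using theta_crossing(1,2)[OF assms(1,2) t] crit_delay_cos_sin[OF assms(3)]
    by (simp_all add: x_def \<omega>_def)
  then have "Im (charD_dlam s Y (\<i> * complex_of_real \<omega>) t) = 2 * \<omega> + s * sin (\<omega> * t) + t * ((s + x) * \<omega>)"
    by (simp add: charD_dlam_imag_axis x_def algebra_simps)
  also have "\<dots> > 0"
    using \<open>\<omega> > 0\<close> \<open>sin (\<omega> * t) > 0\<close> \<open>s > 0\<close> \<open>0 < x\<close> t by (simp add: add_pos_pos)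
  finally show "charD_dlam s Y (\<i> * complex_of_real (omega_p s Y t)) t \<noteq> 0"
    by (auto simp: \<omega>_def)
  then show "charD_dlam s Y (- \<i> * complex_of_real (omega_p s Y t)) t \<noteq> 0"
    using charD_dlam_cnj[of s Y "\<i> * complex_of_real (omega_p s Y t)" t] by simp
qed

lemma crit_delay_no_multiple_roots:
  assumes "s > 0" "Y > 3 * s" "t \<in> crit_delays s Y" "k \<noteq> 1" "k \<noteq> -1"
  shows "charD s Y (\<i> * of_real (real_of_int k * omega_p s Y t)) t \<noteq> 0"
proof
  assume "charD s Y (\<i> * of_real (real_of_int k * omega_p s Y t)) t = 0"
  moreover have t: "t \<in> {0<..<taustar s Y}" using assms(3) by (simp add: crit_delays_def)
  ultimately have "(real_of_int k * omega_p s Y t)^2 = (omega_p s Y t)^2"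
    using imaginary_root_freq(1)[OF assms(1,2)] by blast
  then have "real_of_int (k^2) = 1"
    using omega_p_sq_positive_root(1)[OF assms(1,2) t] by (simp add: power_mult_distrib)
  then have "k^2 = 1" by linarith
  with assms(4,5) show False by (simp add: power2_eq_1_iff)
qed

text \<open>R1', R2' are the t-derivatives of the crossing identities R1, R2 along
  \<open>t \<mapsto> (x, \<omega>, \<theta>)\<close>, with \<open>x' = s * x\<close>. They make \<open>Ft = - i w' D - i (w + t0 w' - th') Q e\<close>, and only the
  second term contributes to the real part of \<open>- Ft / D\<close>.\<close>

lemma crossing_speed_formula:
  fixes s x w C S w' th' t0 :: real
  assumes R1: "s * (1 - 2 * x) * C - s * w * S = w^2 - s * x"
    and R2: "s * w * C + s * (1 - 2 * x) * S = (s + x) * w"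
    and CS: "C^2 + S^2 = 1"
    and R1': "s * (- 2 * (s * x)) * C - s * (1 - 2 * x) * S * th' - s * (w' * S + w * C * th')
      = 2 * w * w' - s * (s * x)"
    and R2': "s * (w' * C - w * S * th') + s * (- 2 * (s * x)) * S + s * (1 - 2 * x) * C * th'
      = s * x * w + (s + x) * w'"
  defines "lam \<equiv> \<i> * complex_of_real w" and "e \<equiv> Complex C (- S)"
  defines "Q \<equiv> complex_of_real (- s) * lam + complex_of_real (s * (1 - 2 * x))"
  defines "D \<equiv> 2 * lam + complex_of_real (s + x) + complex_of_real (- s) * e - complex_of_real t0 * Q * e"
    and "Ft \<equiv> complex_of_real (s * x) * lam + complex_of_real (- 2 * s^2 * x) * e - lam * Q * e
             + complex_of_real (s^2 * x)"
  shows "Re (- Ft / D) = (w + t0 * w' - th') * (w * (2 * w^2 + x^2)) / (cmod D)^2"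
proof -
  define \<Delta> where "\<Delta> = w + t0 * w' - th'"
  have "(2 * lam + complex_of_real (s + x) - complex_of_real s * e) * (\<i> * complex_of_real w')
      + complex_of_real (s * x) * lam + complex_of_real (s^2 * x) + complex_of_real (- 2 * s^2 * x) * e
      - \<i> * complex_of_real th' * Q * e = 0"
    using R1' R2' unfolding lam_def e_def Q_def
    by (simp add: complex_eq_iff algebra_simps power2_eq_square)
  then have Ft: "Ft = - \<i> * complex_of_real w' * D - \<i> * complex_of_real \<Delta> * (Q * e)"
    unfolding Ft_def D_def \<Delta>_def lam_def by (simp add: algebra_simps)
  have Qe: "Q * e = Complex (w^2 - s * x) (- ((s + x) * w))"
    using R1 R2 unfolding Q_def lam_def e_def by (simp add: complex_eq_iff algebra_simps)
  have "e * cnj e = 1" using CS by (simp add: e_def complex_eq_iff power2_eq_square)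
  have "Q * e * cnj D = Q * e * cnj (2 * lam + complex_of_real (s + x)) - complex_of_real s * Q * (e * cnj e)
      - complex_of_real t0 * (Q * e * cnj (Q * e))"
    by (simp add: D_def algebra_simps)
  then have "Im (Q * e * cnj D) = Im (Q * e * cnj (2 * lam + complex_of_real (s + x))) - s * Im Q"
    unfolding \<open>e * cnj e = 1\<close> unfolding complex_mult_cnj by simp
  also have "\<dots> = - (w * (2 * w^2 + x^2))"
    unfolding Qe by (simp add: Q_def lam_def algebra_simps power2_eq_square)
  finally have Im_QeD: "Im (Q * e * cnj D) = - (w * (2 * w^2 + x^2))" .
  show ?thesis
  proof (cases "D = 0")
    case False
    have "- Ft / D = \<i> * complex_of_real w' + \<i> * complex_of_real \<Delta> * (Q * e / D)"
      using False unfolding Ft by (simp add: field_simps)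
    also have "Q * e / D = Q * e * cnj D / complex_of_real ((cmod D)^2)"
      by (rule complex_div_cnj)
    finally have "Re (- Ft / D) = - \<Delta> * (Im (Q * e * cnj D) / (cmod D)^2)"
      by (simp add: Im_divide_of_real)
    then show ?thesis unfolding Im_QeD by (simp add: \<Delta>_def algebra_simps)
  qed simp
qed

lemma omega_p_has_derivative:
  assumes "s > 0" "Y > 3 * s" "t \<in> {0<..<taustar s Y}"
  obtains w' where "(omega_p s Y has_real_derivative w') (at t)"
proof -
  define x where "x = xp s Y t"
  have x: "0 < x" "x < 1/3" using xp_bounds[OF assms] by (auto simp: x_def)
  have "x^4 + s^2 * (12 * x^2 - 16 * x + 4) = x^4 + 4 * (s^2 * (1 - 3 * x) * (1 - x))"
    by (simp add: algebra_simps power2_eq_square)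
  moreover have "0 < x^4 + 4 * (s^2 * (1 - 3 * x) * (1 - x))"
    using \<open>s > 0\<close> x by (intro add_pos_pos) auto
  ultimately have radicand: "0 < x^4 + s^2 * (12 * x^2 - 16 * x + 4)" by linarith
  have W: "0 < (- (x^2) + sqrt (x^4 + s^2 * (12 * x^2 - 16 * x + 4))) / 2"
    using quadratic_positive_root(1)[OF assms(1) x] by simp
  have "omega_p s Y = (\<lambda>t. sqrt ((- ((xp s Y t)^2)
      + sqrt ((xp s Y t)^4 + s^2 * (12 * (xp s Y t)^2 - 16 * xp s Y t + 4))) / 2))"
    by (simp add: fun_eq_iff omega_p_def Let_def)
  moreover have "\<exists>w'. ((\<lambda>t. sqrt ((- ((xp s Y t)^2)
      + sqrt ((xp s Y t)^4 + s^2 * (12 * (xp s Y t)^2 - 16 * xp s Y t + 4))) / 2))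
      has_real_derivative w') (at t)"
    by (rule exI) (rule derivative_eq_intros xp_has_real_derivative refl
        | use radicand W in \<open>simp add: x_def\<close>)+
  ultimately show thesis using that by metis
qed

lemma theta_has_derivative:
  assumes "s > 0" "Y > 3 * s" "t \<in> {0<..<taustar s Y}"
  obtains th' where "(theta s Y has_real_derivative th') (at t)"
proof -
  obtain w' where w': "(omega_p s Y has_real_derivative w') (at t)"
    using omega_p_has_derivative[OF assms] by blast
  define x where "x = xp s Y t"
  have "0 < x" using xp_bounds[OF assms] by (simp add: x_def)
  have den: "s * ((1 - 2 * x)^2 + (omega_p s Y t)^2) \<noteq> 0"
    using \<open>s > 0\<close> omega_p_sq_positive_root(1)[OF assms] by (simp add: add_nonneg_pos)
  have h2: "- 1 < ((omega_p s Y t)^2 * (1 + s - x) - (1 - 2 * x) * s * x) / (s * ((1 - 2 * x)^2 + (omega_p s Y t)^2))"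
    "((omega_p s Y t)^2 * (1 + s - x) - (1 - 2 * x) * s * x) / (s * ((1 - 2 * x)^2 + (omega_p s Y t)^2)) < 1"
    using theta_crossing(3,4)[OF assms] by (simp_all add: h2_def Let_def x_def)
  have "theta s Y = (\<lambda>t. arccos (((omega_p s Y t)^2 * (1 + s - xp s Y t)
      - (1 - 2 * xp s Y t) * s * xp s Y t) / (s * ((1 - 2 * xp s Y t)^2 + (omega_p s Y t)^2))))"
    by (simp add: fun_eq_iff theta_def h2_def Let_def)
  moreover have "\<exists>th'. ((\<lambda>t. arccos (((omega_p s Y t)^2 * (1 + s - xp s Y t)
      - (1 - 2 * xp s Y t) * s * xp s Y t) / (s * ((1 - 2 * xp s Y t)^2 + (omega_p s Y t)^2))))
      has_real_derivative th') (at t)"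
    by (rule exI) (rule derivative_eq_intros xp_has_real_derivative w' refl
        | use den h2 in \<open>simp add: x_def\<close>)+
  ultimately show thesis using that by metis
qed

lemma theta_crossing_derivative:
  assumes "s > 0" "Y > 3 * s" "t0 \<in> {0<..<taustar s Y}"
    and w': "(omega_p s Y has_real_derivative w') (at t0)"
    and th': "(theta s Y has_real_derivative th') (at t0)"
  defines "x \<equiv> xp s Y t0" and "\<omega> \<equiv> omega_p s Y t0"
    and "C \<equiv> cos (theta s Y t0)" and "S \<equiv> sin (theta s Y t0)"
  shows "s * (- 2 * (s * x)) * C - s * (1 - 2 * x) * S * th' - s * (w' * S + \<omega> * C * th')
      = 2 * \<omega> * w' - s * (s * x)"
    and "s * (w' * C - \<omega> * S * th') + s * (- 2 * (s * x)) * S + s * (1 - 2 * x) * C * th'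
      = s * x * \<omega> + (s + x) * w'"
proof -
  note crossing = theta_crossing(1)[OF assms(1,2)]
  have "((\<lambda>t. s * (1 - 2 * xp s Y t) * cos (theta s Y t) - s * omega_p s Y t * sin (theta s Y t)
        - ((omega_p s Y t)^2 - s * xp s Y t)) has_real_derivative
      s * (- 2 * (s * x)) * C - s * (1 - 2 * x) * S * th' - s * (w' * S + \<omega> * C * th')
        - (2 * \<omega> * w' - s * (s * x))) (at t0)"
    by (auto intro!: derivative_eq_intros xp_has_real_derivative w' th'
        simp: x_def \<omega>_def C_def S_def algebra_simps)
  from has_real_derivative_zero_on_open[OF _ assms(3) _ this]
  show "s * (- 2 * (s * x)) * C - s * (1 - 2 * x) * S * th' - s * (w' * S + \<omega> * C * th')
      = 2 * \<omega> * w' - s * (s * x)"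
    using crossing by simp
  have "((\<lambda>t. s * omega_p s Y t * cos (theta s Y t) + s * (1 - 2 * xp s Y t) * sin (theta s Y t)
        - (s + xp s Y t) * omega_p s Y t) has_real_derivative
      s * (w' * C - \<omega> * S * th') + s * (- 2 * (s * x)) * S + s * (1 - 2 * x) * C * th'
        - (s * x * \<omega> + (s + x) * w')) (at t0)"
    by (auto intro!: derivative_eq_intros xp_has_real_derivative w' th'
        simp: x_def \<omega>_def C_def S_def algebra_simps)
  from has_real_derivative_zero_on_open[OF _ assms(3) _ this]
  show "s * (w' * C - \<omega> * S * th') + s * (- 2 * (s * x)) * S + s * (1 - 2 * x) * C * th'
      = s * x * \<omega> + (s + x) * w'"
    using crossing by simp
qed

lemma crit_delay_transversal:
  assumes "s > 0" "Y > 3 * s" "t0 \<in> crit_delays s Y"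
    and "deriv (\<lambda>t. t * omega_p s Y t) t0 \<noteq> deriv (theta s Y) t0"
  shows "Re (- charD_dt s Y (\<i> * of_real (omega_p s Y t0)) t0
      / charD_dlam s Y (\<i> * of_real (omega_p s Y t0)) t0) \<noteq> 0"
proof -
  have t0: "t0 \<in> {0<..<taustar s Y}" using assms(3) by (simp add: crit_delays_def)
  obtain w' where w': "(omega_p s Y has_real_derivative w') (at t0)"
    using omega_p_has_derivative[OF assms(1,2) t0] by blast
  obtain th' where th': "(theta s Y has_real_derivative th') (at t0)"
    using theta_has_derivative[OF assms(1,2) t0] by blast
  define x \<omega> C S where "x = xp s Y t0" and "\<omega> = omega_p s Y t0"
    and "C = cos (theta s Y t0)" and "S = sin (theta s Y t0)"
  note R' = theta_crossing_derivative[OF assms(1,2) t0 w' th', folded x_def \<omega>_def C_def S_def]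
  have "((\<lambda>t. t * omega_p s Y t) has_real_derivative \<omega> + t0 * w') (at t0)"
    using w' by (auto intro!: derivative_eq_intros simp: \<omega>_def)
  then have "\<omega> + t0 * w' - th' \<noteq> 0"
    using assms(4) DERIV_imp_deriv th' by (metis eq_iff_diff_eq_0)
  moreover have "\<omega> > 0" using omega_p_sq_positive_root(1)[OF assms(1,2) t0] by (simp add: \<omega>_def)
  moreover have "2 * \<omega>^2 + x^2 > 0" using \<open>\<omega> > 0\<close> by (simp add: add_pos_nonneg)
  moreover have "charD_dlam s Y (\<i> * of_real \<omega>) t0 \<noteq> 0"
    using crit_delay_simple_roots(1)[OF assms(1-3)] by (simp add: \<omega>_def)
  moreover have E: "exp (- (\<i> * complex_of_real \<omega>) * complex_of_real t0) = Complex C (- S)"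
    unfolding exp_minus_imag_mult using crit_delay_cos_sin[OF assms(3)] by (simp add: C_def S_def \<omega>_def)
  have "Re (- charD_dt s Y (\<i> * of_real \<omega>) t0 / charD_dlam s Y (\<i> * of_real \<omega>) t0)
      = (\<omega> + t0 * w' - th') * (\<omega> * (2 * \<omega>^2 + x^2)) / (cmod (charD_dlam s Y (\<i> * of_real \<omega>) t0))^2"
    unfolding charD_dt_def charD_dlam_def coeffs_xp E x_def
    by (rule crossing_speed_formula[OF _ _ _ R'[unfolded x_def]])
      (use theta_crossing(1)[OF assms(1,2) t0] in \<open>simp_all add: \<omega>_def C_def S_def\<close>)
  ultimately show ?thesis unfolding \<omega>_def[symmetric] by simp
qed

lemma deriv_charD: "deriv (\<lambda>l. charD s Y l t) l = charD_dlam s Y l t"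
  by (rule DERIV_imp_deriv[OF charD_has_field_derivative])

lemma crit_delay_simple_root_family:
  assumes "s > 0" "Y > 3 * s" "t0 \<in> crit_delays s Y"
  shows "simple_root_family (charD s Y) (charD_dlam s Y) (\<i> * of_real (omega_p s Y t0)) t0"
  by unfold_locales
    (use charD_has_field_derivative isCont_charD_dlam crit_delay_imaginary_roots(1)[OF assms]
      crit_delay_simple_roots(1)[OF assms] in auto)

lemma crit_delay_root_branch:
  assumes "s > 0" "Y > 3 * s" "t0 \<in> crit_delays s Y"
  shows "\<exists>lam L e. e > 0 \<and> lam t0 = \<i> * of_real (omega_p s Y t0)
    \<and> (\<forall>t. \<bar>t - t0\<bar> < e \<longrightarrow> charD s Y (lam t) t = 0) \<and> (lam has_vector_derivative L) (at t0)"
proof -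
  interpret simple_root_family "charD s Y" "charD_dlam s Y" "\<i> * of_real (omega_p s Y t0)" t0
    by (rule crit_delay_simple_root_family[OF assms])
  note Ft = charD_has_vector_derivative[of s Y "\<i> * of_real (omega_p s Y t0)" t0]
  obtain lam e where "e > 0" "lam t0 = \<i> * of_real (omega_p s Y t0)"
    "\<And>t. \<bar>t - t0\<bar> < e \<Longrightarrow> charD s Y (lam t) t = 0" "isCont lam t0"
    using root_branch[OF has_vector_derivative_continuous[OF Ft]] by blast
  with root_branch_has_vector_derivative[OF Ft] show ?thesis by blast
qed

lemma crit_delay_root_branch_transversal:
  assumes "s > 0" "Y > 3 * s" "t0 \<in> crit_delays s Y"
    and "deriv (\<lambda>t. t * omega_p s Y t) t0 \<noteq> deriv (theta s Y) t0"
    and "e > 0" "lam t0 = \<i> * of_real (omega_p s Y t0)"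
    and "\<forall>t. \<bar>t - t0\<bar> < e \<longrightarrow> charD s Y (lam t) t = 0" and "(lam has_vector_derivative L) (at t0)"
  shows "Re L \<noteq> 0"
proof -
  interpret simple_root_family "charD s Y" "charD_dlam s Y" "\<i> * of_real (omega_p s Y t0)" t0
    by (rule crit_delay_simple_root_family[OF assms(1-3)])
  have "(lam has_vector_derivative - charD_dt s Y (\<i> * of_real (omega_p s Y t0)) t0
      / charD_dlam s Y (\<i> * of_real (omega_p s Y t0)) t0) (at t0)"
    using root_branch_has_vector_derivative[where lam = lam,
      OF charD_has_vector_derivative[of s Y "\<i> * of_real (omega_p s Y t0)" t0] assms(5,6)] assms(7,8)
      has_vector_derivative_continuous by blast
  then show ?thesis
    using vector_derivative_unique_at assms(8) crit_delay_transversal[OF assms(1-4)] by fastforce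
qed

theorem theorem3p4:
  fixes s Y :: real
  assumes s_pos: "s > 0" and Y_gt: "Y > 3 * s"
  shows
    "(\<forall>t \<in> {0<..<taustar s Y}.
        (\<exists>w::real. w > 0 \<and> charD s Y (\<i> * of_real w) t = 0
                        \<and> charD s Y (- \<i> * of_real w) t = 0)
        \<longleftrightarrow> t \<in> crit_delays s Y)
   \<and> (\<forall>t0 \<in> crit_delays s Y.
        charD s Y (\<i> * of_real (omega_p s Y t0)) t0 = 0
      \<and> charD s Y (- \<i> * of_real (omega_p s Y t0)) t0 = 0
      \<and> deriv (\<lambda>l. charD s Y l t0) (\<i> * of_real (omega_p s Y t0)) \<noteq> 0
      \<and> deriv (\<lambda>l. charD s Y l t0) (- \<i> * of_real (omega_p s Y t0)) \<noteq> 0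
      \<and> (\<forall>k::int. k \<noteq> 1 \<and> k \<noteq> -1 \<longrightarrow>
            charD s Y (\<i> * of_real (real_of_int k * omega_p s Y t0)) t0 \<noteq> 0)
      \<and> (deriv (\<lambda>t. t * omega_p s Y t) t0 \<noteq> deriv (theta s Y) t0 \<longrightarrow>
           (\<exists>lam L e. e > 0 \<and> lam t0 = \<i> * of_real (omega_p s Y t0)
              \<and> (\<forall>t. \<bar>t - t0\<bar> < e \<longrightarrow> charD s Y (lam t) t = 0)
              \<and> (lam has_vector_derivative L) (at t0))
         \<and> (\<forall>lam L e. e > 0 \<and> lam t0 = \<i> * of_real (omega_p s Y t0)
              \<and> (\<forall>t. \<bar>t - t0\<bar> < e \<longrightarrow> charD s Y (lam t) t = 0)
              \<and> (lam has_vector_derivative L) (at t0)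
              \<longrightarrow> Re L \<noteq> 0)))"
proof -
  note crit = crit_delay_imaginary_roots crit_delay_simple_roots crit_delay_no_multiple_roots
    crit_delay_root_branch crit_delay_root_branch_transversal
  show ?thesis
    unfolding deriv_charD
    using imaginary_root_iff_crit_delay[OF s_pos Y_gt] crit[OF s_pos Y_gt] by blast
qed

end
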